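(* Let $n\ge 2$, $K\ge 1$ and $\lambda_-<\lambda_+$ in $(-1,1)$. The set $\mathcal{G}_{\lambda_-,\lambda_+}$ is non-convex.
   Context: $\mathcal{W}_{\lambda_-,\lambda_+}$ denotes the set of symmetric matrices $W\in\mathbb{R}^{n\times n}$ with $\lambda_1(W)=1$ with eigenvector $\mathbf{1}/\sqrt{n}$ and $\lambda_-\le\lambda_n(W)\le\dots\le\lambda_2(W)\le\lambda_+$. $\mathcal{G}_{\lambda_-,\lambda_+}$ is the set of all symmetric positive semidefinite matrices of the form $G_c=\begin{bmatrix}P_x^TP_x & P_x^TP_y\\ P_y^TP_x & P_y^TP_y\end{bmatrix}$, where for some dimension $d\ge1$, $P_x=[x_1^1\dots x_n^1\dots x_1^K\dots x_n^K]\in\mathbb{R}^{d\times nK}$ and $P_y=[y_1^1\dots y_n^1\dots y_1^K\dots y_n^K]\in\mathbb{R}^{d\times nK}$, such that there exists $W\in\mathcal{W}_{\lambda_-,\lambda_+}$ with $\mathbf{y}^k=(W\otimes I_d)\mathbf{x}^k$ for all $k=1,\dots,K$, where $\mathbf{x}^k=(x_1^k,\dots,x_n^k)\in\mathbb{R}^{nd}$ and similarly for $\mathbf{y}^k$. *)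

theory Defs
  imports "Jordan_Normal_Form.Char_Poly"
begin

definition ones_vec :: "nat \<Rightarrow> real vec" where
  "ones_vec n = vec n (\<lambda>_. 1)"

text \<open>W_{lm,lp}: symmetric n x n real matrices with top eigenvalue 1 with eigenvector 1
  (equivalently 1/sqrt n), the remaining n-1 eigenvalues (with multiplicity, i.e. roots of
  the characteristic polynomial) lying in [lm, lp].\<close>
definition W_set :: "nat \<Rightarrow> real \<Rightarrow> real \<Rightarrow> real mat set" where
  "W_set n lm lp = {W. W \<in> carrier_mat n n \<and> transpose_mat W = W \<and>
     W *\<^sub>v ones_vec n = ones_vec n \<and>
     (\<exists>M :: real multiset. size M = n - 1 \<and>
        char_poly W = [:-1, 1:] * (\<Prod>a\<in>#M. [:-a, 1:]) \<and>
        (\<forall>a\<in>#M. lm \<le> a \<and> a \<le> lp))}"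

definition psd_mat :: "real mat \<Rightarrow> bool" where
  "psd_mat G \<longleftrightarrow> G \<in> carrier_mat (dim_row G) (dim_row G) \<and> transpose_mat G = G \<and>
     (\<forall>v \<in> carrier_vec (dim_row G). v \<bullet> (G *\<^sub>v v) \<ge> 0)"

text \<open>G_{lm,lp}. Columns of Px (resp. Py) are x_1^1..x_n^1..x_1^K..x_n^K, 0-indexed as
  column k*n+i for k<K, i<n. The condition y^k = (W \<otimes> I_d) x^k is written out entrywise.\<close>
definition G_set :: "nat \<Rightarrow> nat \<Rightarrow> real \<Rightarrow> real \<Rightarrow> real mat set" where
  "G_set n K lm lp = {G. \<exists>(d::nat) Px Py W. d \<ge> 1 \<and>
     Px \<in> carrier_mat d (n * K) \<and> Py \<in> carrier_mat d (n * K) \<and>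
     W \<in> W_set n lm lp \<and>
     (\<forall>k<K. \<forall>i<n. \<forall>r<d. Py $$ (r, k * n + i) = (\<Sum>j<n. W $$ (i, j) * Px $$ (r, k * n + j))) \<and>
     G = four_block_mat (transpose_mat Px * Px) (transpose_mat Px * Py)
                        (transpose_mat Py * Px) (transpose_mat Py * Py) \<and>
     psd_mat G}"

definition convex_mat_set :: "real mat set \<Rightarrow> bool" where
  "convex_mat_set S \<longleftrightarrow> (\<forall>A\<in>S. \<forall>B\<in>S. \<forall>t::real. 0 \<le> t \<and> t \<le> 1 \<longrightarrow>
     t \<cdot>\<^sub>m A + (1 - t) \<cdot>\<^sub>m B \<in> S)"

end

theory Submission
  imports Defs
begin

(* For c \<in> [lm, lp] the matrix W_c = c I + (1 - c)/n J lies in W_{lm,lp}: it is similar to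
   diag(1, c, ..., c). With P_x = I and P_y = (W_c \<otimes> I) P_x it yields Gram matrices G_c in G_{lm,lp}.
   If some G in G_{lm,lp} has the identity as its top-left n x n block, the first n columns of
   its P_x are orthonormal, so with N = nK the entries G(l, N) are the first row of W and
   G(N, N) = \<Sigma>_l G(l, N)^2. The midpoint of G_lm and G_lp again has identity top-left block,
   so by strict convexity of the square it satisfies this quadratic relation only if G_lm and
   G_lp agree in column N; but their (0, N) entries lm + (1 - lm)/n and lp + (1 - lp)/n differ. *)

lemma sum_square_midpoint_eq_imp_eq:
  fixes a b :: "'i \<Rightarrow> real"
  assumes "finite A" and x: "x \<in> A"
    and mid: "(\<Sum>y\<in>A. ((a y + b y) / 2)\<^sup>2) = ((\<Sum>y\<in>A. (a y)\<^sup>2) + (\<Sum>y\<in>A. (b y)\<^sup>2)) / 2"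
  shows "a x = b x"
proof -
  have "(\<Sum>y\<in>A. (a y - b y)\<^sup>2) = (\<Sum>y\<in>A. 2 * (a y)\<^sup>2 + 2 * (b y)\<^sup>2 - 4 * ((a y + b y) / 2)\<^sup>2)"
    by (rule sum.cong) (simp_all add: power2_eq_square field_simps)
  also have "\<dots> = 2 * (\<Sum>y\<in>A. (a y)\<^sup>2) + 2 * (\<Sum>y\<in>A. (b y)\<^sup>2) - 4 * (\<Sum>y\<in>A. ((a y + b y) / 2)\<^sup>2)"
    by (simp add: sum.distrib sum_subtractf sum_distrib_left)
  also have "\<dots> = 0" using mid by simp
  finally have "(a x - b x)\<^sup>2 = 0"
    using assms by (subst (asm) sum_nonneg_eq_0_iff) auto
  then show ?thesis by simp
qed

lemma index_transpose_mult_mat: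
  assumes "A \<in> carrier_mat d m" "B \<in> carrier_mat d m'" "i < m" "j < m'"
  shows "(transpose_mat A * B) $$ (i, j) = (\<Sum>r<d. A $$ (r, i) * B $$ (r, j))"
  using assms by (simp add: scalar_prod_def atLeast0LessThan)

lemma psd_transpose_mult_self:
  assumes B: "B \<in> carrier_mat d m"
  shows "psd_mat (transpose_mat B * B)"
  unfolding psd_mat_def
proof (intro conjI ballI)
  show "transpose_mat B * B \<in> carrier_mat (dim_row (transpose_mat B * B)) (dim_row (transpose_mat B * B))"
    using B by simp
  show "transpose_mat (transpose_mat B * B) = transpose_mat B * B"
    using B by (simp add: transpose_mult)
  fix v :: "real vec" assume "v \<in> carrier_vec (dim_row (transpose_mat B * B))"
  then have v: "v \<in> carrier_vec m" using B by simp
  have "v \<bullet> ((transpose_mat B * B) *\<^sub>v v) = (transpose_mat B *\<^sub>v (B *\<^sub>v v)) \<bullet> v"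
    using B v by (simp add: comm_scalar_prod[of _ m])
  also have "\<dots> = (B *\<^sub>v v) \<bullet> (B *\<^sub>v v)"
    using B v by (simp add: transpose_vec_mult_scalar)
  also have "\<dots> \<ge> 0" unfolding scalar_prod_def by (intro sum_nonneg) simp
  finally show "v \<bullet> ((transpose_mat B * B) *\<^sub>v v) \<ge> 0" .
qed

definition mix_mat :: "nat \<Rightarrow> 'a :: field \<Rightarrow> 'a mat" where
  "mix_mat n c = mat n n (\<lambda>(i, j). (if i = j then c else 0) + (1 - c) / of_nat n)"

(* Columns: the all-ones vector (eigenvalue 1) and e_0 - e_k for 0 < k < n (eigenvalue c). *)
definition mix_eigenbasis :: "nat \<Rightarrow> 'a :: ring_1 mat" where
  "mix_eigenbasis n = mat n n (\<lambda>(i, k).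
     if k = 0 then 1 else (if i = 0 then 1 else 0) - (if i = k then 1 else 0))"

definition mix_eigenbasis_inv :: "nat \<Rightarrow> 'a :: field mat" where
  "mix_eigenbasis_inv n = mat n n (\<lambda>(k, j). 1 / of_nat n - (if k \<noteq> 0 \<and> k = j then 1 else 0))"

lemma sum_mult_unit_vec_diff:
  fixes f :: "nat \<Rightarrow> 'a :: ring_1"
  assumes "k < n"
  shows "(\<Sum>i<n. f i * ((if i = 0 then 1 else 0) - (if i = k then 1 else 0))) = f 0 - f k"
  using assms by (simp add: right_diff_distrib sum_subtractf if_distrib[of "(*) _"] cong: if_cong)

lemma mix_eigenbasis_inv_mult:
  assumes "n \<ge> 1"
  shows "mix_eigenbasis_inv n * mix_eigenbasis n = (1\<^sub>m n :: 'a :: field_char_0 mat)"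
proof (rule eq_matI)
  fix k j assume "k < dim_row (1\<^sub>m n :: 'a mat)" "j < dim_col (1\<^sub>m n :: 'a mat)"
  then have k: "k < n" and j: "j < n" by auto
  have "(mix_eigenbasis_inv n * mix_eigenbasis n) $$ (k, j)
      = (\<Sum>i<n. mix_eigenbasis_inv n $$ (k, i) * (mix_eigenbasis n :: 'a mat) $$ (i, j))"
    using k j by (simp add: mix_eigenbasis_def mix_eigenbasis_inv_def scalar_prod_def atLeast0LessThan)
  also have "\<dots> = (1\<^sub>m n :: 'a mat) $$ (k, j)"
  proof (cases "j = 0")
    case True
    then show ?thesis using k j assms
      by (simp add: mix_eigenbasis_def mix_eigenbasis_inv_def sum_subtractf)
  next
    case False
    then show ?thesis using k j
      by (simp add: mix_eigenbasis_def sum_mult_unit_vec_diff) (simp add: mix_eigenbasis_inv_def)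
  qed
  finally show "(mix_eigenbasis_inv n * mix_eigenbasis n) $$ (k, j) = (1\<^sub>m n :: 'a mat) $$ (k, j)" .
qed (auto simp: mix_eigenbasis_def mix_eigenbasis_inv_def)

lemma mix_mat_mult_eigenbasis:
  assumes "n \<ge> 1"
  shows "mix_mat n c * mix_eigenbasis n
       = mix_eigenbasis n * mat_diag n (\<lambda>k. if k = 0 then 1 else (c :: 'a :: field_char_0))"
proof (rule eq_matI)
  fix i k assume "i < dim_row (mix_eigenbasis n * mat_diag n (\<lambda>k. if k = 0 then 1 else c))"
    "k < dim_col (mix_eigenbasis n * mat_diag n (\<lambda>k. if k = 0 then 1 else c))"
  then have i: "i < n" and k: "k < n" by (auto simp: mix_eigenbasis_def mat_diag_def)
  have "(mix_mat n c * mix_eigenbasis n) $$ (i, k) = (\<Sum>j<n. mix_mat n c $$ (i, j) * mix_eigenbasis n $$ (j, k))"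
    using i k by (simp add: mix_mat_def mix_eigenbasis_def scalar_prod_def atLeast0LessThan)
  also have "\<dots> = mix_eigenbasis n $$ (i, k) * (if k = 0 then 1 else c)"
  proof (cases "k = 0")
    case True
    then show ?thesis using i k assms by (simp add: mix_mat_def mix_eigenbasis_def sum.distrib)
  next
    case False
    then show ?thesis using i k
      by (simp add: mix_eigenbasis_def sum_mult_unit_vec_diff) (simp add: mix_mat_def algebra_simps)
  qed
  also have "\<dots> = (mix_eigenbasis n * mat_diag n (\<lambda>k. if k = 0 then 1 else c)) $$ (i, k)"
    using i k by (simp add: mat_diag_mult_right[of _ n] mix_eigenbasis_def)
  finally show "(mix_mat n c * mix_eigenbasis n) $$ (i, k) = \<dots>" .
qed (auto simp: mix_mat_def mix_eigenbasis_def mat_diag_def)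

lemma char_poly_mix_mat:
  assumes "n \<ge> 1"
  shows "char_poly (mix_mat n (c :: 'a :: field_char_0)) = [:-1, 1:] * [:-c, 1:] ^ (n - 1)"
proof -
  define P Q D where "P = (mix_eigenbasis n :: 'a mat)" and "Q = (mix_eigenbasis_inv n :: 'a mat)"
    and "D = mat_diag n (\<lambda>k. if k = 0 then 1 else c)"
  have carrier: "P \<in> carrier_mat n n" "Q \<in> carrier_mat n n" "D \<in> carrier_mat n n"
    "mix_mat n c \<in> carrier_mat n n"
    by (auto simp: P_def Q_def D_def mix_eigenbasis_def mix_eigenbasis_inv_def mix_mat_def)
  have QP: "Q * P = 1\<^sub>m n" using mix_eigenbasis_inv_mult[OF assms] by (simp add: P_def Q_def)
  have PQ: "P * Q = 1\<^sub>m n" by (rule mat_mult_left_right_inverse[OF carrier(2,1) QP])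
  have "mix_mat n c = mix_mat n c * P * Q"
    using carrier by (simp add: assoc_mult_mat[of _ n n _ n _ n] PQ)
  also have "\<dots> = P * D * Q"
    unfolding P_def D_def mix_mat_mult_eigenbasis[OF assms] ..
  finally have "similar_mat (mix_mat n c) D"
    using carrier by (intro similar_matI[OF _ PQ QP]) auto
  then have "char_poly (mix_mat n c) = char_poly D" by (rule char_poly_similar)
  also have "\<dots> = (\<Prod>a\<leftarrow>diag_mat D. [:- a, 1:])"
    by (rule char_poly_upper_triangular[OF carrier(3)]) (auto simp: upper_triangular_def D_def mat_diag_def)
  also have "diag_mat D = 1 # replicate (n - 1) c"
    using assms by (intro nth_equalityI) (auto simp: diag_mat_def D_def mat_diag_def nth_Cons')
  finally show ?thesis by (simp add: prod_list_replicate)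
qed

lemma mix_mat_in_W_set:
  assumes "n \<ge> 1" and "lm \<le> c" and "c \<le> lp"
  shows "mix_mat n c \<in> W_set n lm lp"
proof -
  have "mix_mat n c *\<^sub>v ones_vec n = ones_vec n"
  proof (rule eq_vecI)
    fix i assume "i < dim_vec (ones_vec n)"
    then have i: "i < n" by (simp add: ones_vec_def)
    have "(mix_mat n c *\<^sub>v ones_vec n) $ i = (\<Sum>j<n. (if i = j then c else 0) + (1 - c) / real n)"
      using i by (simp add: mix_mat_def ones_vec_def scalar_prod_def atLeast0LessThan)
    also have "\<dots> = 1" using i assms(1) by (simp add: sum.distrib)
    finally show "(mix_mat n c *\<^sub>v ones_vec n) $ i = ones_vec n $ i" using i by (simp add: ones_vec_def)
  qed (simp add: mix_mat_def ones_vec_def)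
  moreover have "transpose_mat (mix_mat n c) = mix_mat n c"
    by (rule eq_matI) (auto simp: mix_mat_def)
  moreover have "char_poly (mix_mat n c) = [:-1, 1:] * (\<Prod>a\<in># replicate_mset (n - 1) c. [:-a, 1:])"
    by (simp add: char_poly_mix_mat[OF assms(1)])
  ultimately show ?thesis
    unfolding W_set_def using assms(2,3)
    by (intro CollectI conjI exI[of _ "replicate_mset (n - 1) c"]) (auto simp: mix_mat_def)
qed

definition gram_mat :: "real mat \<Rightarrow> real mat \<Rightarrow> real mat" where
  "gram_mat X Y = four_block_mat (transpose_mat X * X) (transpose_mat X * Y)
                                 (transpose_mat Y * X) (transpose_mat Y * Y)"

lemma gram_mat_eq_transpose_mult:
  assumes X: "X \<in> carrier_mat d N" and Y: "Y \<in> carrier_mat d N"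
  defines "B \<equiv> four_block_mat X Y (0\<^sub>m 0 N) (0\<^sub>m 0 N)"
  shows "gram_mat X Y = transpose_mat B * B"
proof -
  have "transpose_mat B * B = four_block_mat (transpose_mat X) (0\<^sub>m N 0) (transpose_mat Y) (0\<^sub>m N 0) * B"
    unfolding B_def using X Y by (simp add: transpose_four_block_mat[of X d N Y N _ 0])
  also have "\<dots> = gram_mat X Y"
    unfolding B_def gram_mat_def using X Y by (subst mult_four_block_mat[of _ N d _ 0 _ N _ _ N _ N]) auto
  finally show ?thesis ..
qed

lemma psd_gram_mat: "X \<in> carrier_mat d N \<Longrightarrow> Y \<in> carrier_mat d N \<Longrightarrow> psd_mat (gram_mat X Y)"
  unfolding gram_mat_eq_transpose_mult by (rule psd_transpose_mult_self) auto

lemma index_gram_mat: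
  assumes "X \<in> carrier_mat d N" "Y \<in> carrier_mat d N" "i < N" "j < N"
  shows "gram_mat X Y $$ (i, j) = (transpose_mat X * X) $$ (i, j)"
    and "gram_mat X Y $$ (i, N + j) = (transpose_mat X * Y) $$ (i, j)"
    and "gram_mat X Y $$ (N + i, N + j) = (transpose_mat Y * Y) $$ (i, j)"
  using assms by (auto simp: gram_mat_def)

lemma transpose_mult_columnwise_combination:
  fixes W :: "'a :: comm_semiring_1 mat"
  assumes Z: "Z \<in> carrier_mat d m" and X: "X \<in> carrier_mat d N" and Y: "Y \<in> carrier_mat d N"
    and "n \<le> N" and a: "a < m" and j: "j < n"
    and Y_def: "\<And>i r. i < n \<Longrightarrow> r < d \<Longrightarrow> Y $$ (r, i) = (\<Sum>l<n. W $$ (i, l) * X $$ (r, l))"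
  shows "(transpose_mat Z * Y) $$ (a, j) = (\<Sum>l<n. W $$ (j, l) * (transpose_mat Z * X) $$ (a, l))"
proof -
  have "j < N" using assms by simp
  have "(transpose_mat Z * Y) $$ (a, j) = (\<Sum>r<d. \<Sum>l<n. W $$ (j, l) * (Z $$ (r, a) * X $$ (r, l)))"
    using a j \<open>j < N\<close> by (simp add: index_transpose_mult_mat[OF Z Y] Y_def sum_distrib_left mult_ac)
  also have "\<dots> = (\<Sum>l<n. W $$ (j, l) * (\<Sum>r<d. Z $$ (r, a) * X $$ (r, l)))"
    by (simp add: sum.swap[of _ "{..<d}"] sum_distrib_left)
  also have "\<dots> = (\<Sum>l<n. W $$ (j, l) * (transpose_mat Z * X) $$ (a, l))"
  proof (intro sum.cong refl)
    fix l assume "l \<in> {..<n}"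
    then have "l < N" using \<open>n \<le> N\<close> by simp
    then show "W $$ (j, l) * (\<Sum>r<d. Z $$ (r, a) * X $$ (r, l)) = W $$ (j, l) * (transpose_mat Z * X) $$ (a, l)"
      by (simp only: index_transpose_mult_mat[OF Z X a])
  qed
  finally show ?thesis .
qed

lemma transpose_mult_orthonormal_combination:
  fixes W :: "'a :: comm_semiring_1 mat"
  assumes X: "X \<in> carrier_mat d N" and Y: "Y \<in> carrier_mat d N" and "n \<le> N"
    and Y_def: "\<And>i r. i < n \<Longrightarrow> r < d \<Longrightarrow> Y $$ (r, i) = (\<Sum>l<n. W $$ (i, l) * X $$ (r, l))"
    and orth: "\<And>i j. i < n \<Longrightarrow> j < n \<Longrightarrow> (transpose_mat X * X) $$ (i, j) = (if i = j then 1 else 0)"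
    and i: "i < n" and j: "j < n"
  shows "(transpose_mat X * Y) $$ (i, j) = W $$ (j, i)"
    and "(transpose_mat Y * Y) $$ (i, j) = (\<Sum>l<n. W $$ (i, l) * W $$ (j, l))"
proof -
  have XY: "(transpose_mat X * Y) $$ (i', j') = W $$ (j', i')" if "i' < n" "j' < n" for i' j'
  proof -
    have "(transpose_mat X * Y) $$ (i', j') = (\<Sum>l<n. W $$ (j', l) * (transpose_mat X * X) $$ (i', l))"
      using that \<open>n \<le> N\<close> by (simp add: transpose_mult_columnwise_combination[OF X X Y _ _ _ Y_def])
    also have "\<dots> = (\<Sum>l<n. if l = i' then W $$ (j', i') else 0)"
      using that by (intro sum.cong refl) (auto simp: orth)
    finally show ?thesis using that by simp
  qed
  show "(transpose_mat X * Y) $$ (i, j) = W $$ (j, i)" using XY[OF i j] .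
  have "(transpose_mat Y * X) $$ (i, l) = W $$ (i, l)" if "l < n" for l
  proof -
    have "i < N" "l < N" using i that \<open>n \<le> N\<close> by simp_all
    then have "(transpose_mat Y * X) $$ (i, l) = (transpose_mat X * Y) $$ (l, i)"
      by (simp only: index_transpose_mult_mat[OF Y X] index_transpose_mult_mat[OF X Y] mult.commute)
    then show ?thesis using XY[OF that i] by simp
  qed
  then show "(transpose_mat Y * Y) $$ (i, j) = (\<Sum>l<n. W $$ (i, l) * W $$ (j, l))"
    using i j \<open>n \<le> N\<close> by (simp add: transpose_mult_columnwise_combination[OF Y X Y _ _ _ Y_def] mult.commute)
qed

(* The k-th block of n columns becomes (W \<otimes> I_d) x^k in the notation of G_set. *)
definition blockwise_apply :: "nat \<Rightarrow> 'a :: semiring_0 mat \<Rightarrow> 'a mat \<Rightarrow> 'a mat" where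
  "blockwise_apply n W X = mat (dim_row X) (dim_col X)
     (\<lambda>(r, c). \<Sum>j<n. W $$ (c mod n, j) * X $$ (r, c div n * n + j))"

lemma blockwise_apply_carrier: "X \<in> carrier_mat d m \<Longrightarrow> blockwise_apply n W X \<in> carrier_mat d m"
  by (simp add: blockwise_apply_def)

lemma index_blockwise_apply:
  assumes "X \<in> carrier_mat d (n * K)" "k < K" "i < n" "r < d"
  shows "blockwise_apply n W X $$ (r, k * n + i) = (\<Sum>j<n. W $$ (i, j) * X $$ (r, k * n + j))"
proof -
  have "k * n + i < (k + 1) * n" using assms by simp
  also have "\<dots> \<le> K * n" using assms by (intro mult_right_mono) auto
  finally show ?thesis using assms by (simp add: blockwise_apply_def mult.commute)
qed

lemma gram_blockwise_apply_in_G_set: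
  assumes "d \<ge> 1" and X: "X \<in> carrier_mat d (n * K)" and "W \<in> W_set n lm lp"
  shows "gram_mat X (blockwise_apply n W X) \<in> G_set n K lm lp"
  unfolding G_set_def
  using assms blockwise_apply_carrier[OF X] index_blockwise_apply[OF X]
    psd_gram_mat[OF X blockwise_apply_carrier[OF X]]
  by (intro CollectI exI[of _ d] exI[of _ X] exI[of _ "blockwise_apply n W X"] exI[of _ W])
    (simp add: gram_mat_def)

lemma index_gram_one_blockwise_apply:
  assumes "K \<ge> 1" and i: "i < n" and j: "j < n"
  shows "gram_mat (1\<^sub>m (n * K)) (blockwise_apply n W (1\<^sub>m (n * K))) $$ (i, j) = (if i = j then 1 else 0)"
    and "gram_mat (1\<^sub>m (n * K)) (blockwise_apply n W (1\<^sub>m (n * K))) $$ (i, n * K + j) = W $$ (j, i)"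
proof -
  define N where "N = n * K"
  have "n \<le> N" using \<open>K \<ge> 1\<close> by (simp add: N_def)
  have one: "(1\<^sub>m N :: real mat) \<in> carrier_mat N N" by simp
  have Y: "blockwise_apply n W (1\<^sub>m N) \<in> carrier_mat N N" by (rule blockwise_apply_carrier[OF one])
  have Y_def: "blockwise_apply n W (1\<^sub>m N) $$ (r, l) = (\<Sum>i<n. W $$ (l, i) * 1\<^sub>m N $$ (r, i))"
    if "l < n" "r < N" for l r
    using index_blockwise_apply[of "1\<^sub>m N" N n K 0 l r W] that \<open>K \<ge> 1\<close> by (simp add: N_def)
  have orth: "(transpose_mat (1\<^sub>m N) * 1\<^sub>m N) $$ (i, j) = (if i = j then 1 else (0 :: real))"
    if "i < n" "j < n" for i j
    using that \<open>n \<le> N\<close> by simp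
  show "gram_mat (1\<^sub>m (n * K)) (blockwise_apply n W (1\<^sub>m (n * K))) $$ (i, j) = (if i = j then 1 else 0)"
    using i j \<open>n \<le> N\<close> by (simp add: index_gram_mat(1)[OF one Y] N_def[symmetric])
  show "gram_mat (1\<^sub>m (n * K)) (blockwise_apply n W (1\<^sub>m (n * K))) $$ (i, n * K + j) = W $$ (j, i)"
    using transpose_mult_orthonormal_combination(1)[OF one Y \<open>n \<le> N\<close> Y_def orth i j] i j \<open>n \<le> N\<close>
    by (simp add: index_gram_mat(2)[OF one Y] N_def[symmetric])
qed

lemma G_set_carrier: "G \<in> G_set n K lm lp \<Longrightarrow> G \<in> carrier_mat (n * K + n * K) (n * K + n * K)"
  unfolding G_set_def by auto

lemma G_set_quadratic_constraint:
  assumes G: "G \<in> G_set n K lm lp" and "K \<ge> 1"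
    and top: "\<And>i j. i < n \<Longrightarrow> j < n \<Longrightarrow> G $$ (i, j) = (if i = j then 1 else 0)"
    and j: "j < n"
  shows "G $$ (n * K + j, n * K + j) = (\<Sum>l<n. (G $$ (l, n * K + j))\<^sup>2)"
proof -
  define N where "N = n * K"
  have "n \<le> N" using \<open>K \<ge> 1\<close> by (simp add: N_def)
  obtain d X Y W where X: "X \<in> carrier_mat d N" and Y: "Y \<in> carrier_mat d N"
    and rel: "\<forall>k<K. \<forall>i<n. \<forall>r<d. Y $$ (r, k * n + i) = (\<Sum>j<n. W $$ (i, j) * X $$ (r, k * n + j))"
    and G_eq: "G = gram_mat X Y"
    using G unfolding G_set_def gram_mat_def N_def by blast
  have Y_def: "Y $$ (r, i) = (\<Sum>l<n. W $$ (i, l) * X $$ (r, l))" if "i < n" "r < d" for i r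
    using rel \<open>K \<ge> 1\<close> that by force
  have orth: "(transpose_mat X * X) $$ (i, i') = (if i = i' then 1 else 0)" if "i < n" "i' < n" for i i'
    using top[OF that] index_gram_mat(1)[OF X Y] that \<open>n \<le> N\<close> by (simp add: G_eq)
  note products = transpose_mult_orthonormal_combination[OF X Y \<open>n \<le> N\<close> Y_def orth]
  have "G $$ (l, N + j) = W $$ (j, l)" if "l < n" for l
    using that j \<open>n \<le> N\<close> by (simp add: G_eq index_gram_mat(2)[OF X Y] products(1))
  moreover have "G $$ (N + j, N + j) = (\<Sum>l<n. W $$ (j, l) * W $$ (j, l))"
    using j \<open>n \<le> N\<close> by (simp add: G_eq index_gram_mat(3)[OF X Y] products(2))
  ultimately show ?thesis unfolding N_def[symmetric] by (simp add: power2_eq_square)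
qed

lemma G_set_midpoint_eq_column:
  assumes G1: "G1 \<in> G_set n K lm lp" and G2: "G2 \<in> G_set n K lm lp"
    and mid: "(1 / 2) \<cdot>\<^sub>m G1 + (1 / 2) \<cdot>\<^sub>m G2 \<in> G_set n K lm lp"
    and "K \<ge> 1"
    and top1: "\<And>i j. i < n \<Longrightarrow> j < n \<Longrightarrow> G1 $$ (i, j) = (if i = j then 1 else 0)"
    and top2: "\<And>i j. i < n \<Longrightarrow> j < n \<Longrightarrow> G2 $$ (i, j) = (if i = j then 1 else 0)"
    and "l < n"
  shows "G1 $$ (l, n * K) = G2 $$ (l, n * K)"
proof -
  define N where "N = n * K"
  define M where "M = (1 / 2) \<cdot>\<^sub>m G1 + (1 / 2) \<cdot>\<^sub>m G2"
  have "n \<le> N" using \<open>K \<ge> 1\<close> by (simp add: N_def)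
  have M_index: "M $$ (i, j) = (G1 $$ (i, j) + G2 $$ (i, j)) / 2" if "i < N + N" "j < N + N" for i j
    using that G_set_carrier[OF G1] G_set_carrier[OF G2] by (simp add: M_def N_def)
  have top: "M $$ (i, j) = (if i = j then 1 else 0)" if "i < n" "j < n" for i j
    using that \<open>n \<le> N\<close> by (simp add: M_index top1 top2)
  have quadratic: "H $$ (N, N) = (\<Sum>i<n. (H $$ (i, N))\<^sup>2)"
    if "H \<in> G_set n K lm lp" "\<And>i j. i < n \<Longrightarrow> j < n \<Longrightarrow> H $$ (i, j) = (if i = j then 1 else 0)" for H
    using G_set_quadratic_constraint[OF that(1) \<open>K \<ge> 1\<close> that(2), of 0] \<open>l < n\<close> by (simp add: N_def)
  show ?thesis unfolding N_def[symmetric]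
  proof (rule sum_square_midpoint_eq_imp_eq[where a = "\<lambda>i. G1 $$ (i, N)" and b = "\<lambda>i. G2 $$ (i, N)"])
    have "(\<Sum>i<n. ((G1 $$ (i, N) + G2 $$ (i, N)) / 2)\<^sup>2) = M $$ (N, N)"
      using quadratic[OF mid[folded M_def] top] \<open>n \<le> N\<close> by (simp add: M_index)
    also have "\<dots> = ((\<Sum>i<n. (G1 $$ (i, N))\<^sup>2) + (\<Sum>i<n. (G2 $$ (i, N))\<^sup>2)) / 2"
      using quadratic[OF G1 top1] quadratic[OF G2 top2] \<open>l < n\<close> \<open>n \<le> N\<close> by (simp add: M_index)
    finally show "(\<Sum>i<n. ((G1 $$ (i, N) + G2 $$ (i, N)) / 2)\<^sup>2)
      = ((\<Sum>i<n. (G1 $$ (i, N))\<^sup>2) + (\<Sum>i<n. (G2 $$ (i, N))\<^sup>2)) / 2" .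
  qed (use \<open>l < n\<close> in auto)
qed

theorem lemma1:
  fixes n K :: nat and lm lp :: real
  assumes "n \<ge> 2" and "K \<ge> 1" and "-1 < lm" and "lm < lp" and "lp < 1"
  shows "\<not> convex_mat_set (G_set n K lm lp)"
proof
  assume convex: "convex_mat_set (G_set n K lm lp)"
  define G where "G c = gram_mat (1\<^sub>m (n * K)) (blockwise_apply n (mix_mat n c) (1\<^sub>m (n * K)))" for c
  have G_in: "G c \<in> G_set n K lm lp" if "lm \<le> c" "c \<le> lp" for c
    unfolding G_def using assms that
    by (intro gram_blockwise_apply_in_G_set[of "n * K"] mix_mat_in_W_set) auto
  have G_lm: "G lm \<in> G_set n K lm lp" and G_lp: "G lp \<in> G_set n K lm lp"
    using G_in assms(4) by simp_all
  have G_index: "G c $$ (i, j) = (if i = j then 1 else 0)" "G c $$ (i, n * K + j) = mix_mat n c $$ (j, i)"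
    if "i < n" "j < n" for c i j
    using index_gram_one_blockwise_apply[OF \<open>K \<ge> 1\<close> that] by (simp_all add: G_def)
  have "(1 / 2) \<cdot>\<^sub>m G lm + (1 / 2) \<cdot>\<^sub>m G lp \<in> G_set n K lm lp"
    using convex[unfolded convex_mat_set_def, rule_format, OF G_lm G_lp, of "1 / 2"] by simp
  then have "G lm $$ (0, n * K) = G lp $$ (0, n * K)"
    using assms(1,2) by (intro G_set_midpoint_eq_column[OF G_lm G_lp]) (auto simp: G_index(1))
  then have "mix_mat n lm $$ (0, 0) = mix_mat n lp $$ (0, 0)"
    using G_index(2)[of 0 0] assms(1) by simp
  then have "(lp - lm) * (real n - 1) = 0"
    using assms(1) by (simp add: mix_mat_def field_simps)
  then show False using assms(1,4) by simp
qed

end
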